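(* Let $\mathfrak A=\langle A,f,g\rangle$ be a betweenness algebra (resp. weak, strong betweenness algebra). Then the Stone map $h\colon A\to 2^{\mathrm{Ult}(A)}$, $h(x)=\{\mathcal U\in\mathrm{Ult}(A)\mid x\in\mathcal U\}$, is an embedding of $\mathfrak A$ into the algebra $\mathrm{Em}^{ps}(\mathfrak A)=\langle 2^{\mathrm{Ult}(A)},\langle Q_f\rangle,[\![S_g]\!]\rangle$, and $\mathrm{Em}^{ps}(\mathfrak A)$ is a betweenness algebra (resp. weak, strong betweenness algebra).
   Context: A PS-algebra is $\langle A,f,g\rangle$, $A$ a Boolean algebra with at least two elements (operations $+,\cdot,-,0,1$), $f,g\colon A^2\to A$, $f$ normal ($f(x,y)=0$ if $x=0$ or $y=0$) and additive in each argument, $g$ co-normal ($g(x,y)=1$ if $x=0$ or $y=0$) and co-additive in each argument ($g(x+x',y)=g(x,y)g(x',y)$, $g(x,y+y')=g(x,y)g(x,y')$). Axioms (for all $x,y,z,a,b$): (ABT0) $x\leq f(x,x)$; (ABT1$_f$) $f(x,y)\leq f(y,x)$; (ABT1$_g$) $g(x,y)\leq g(y,x)$; (ABT2) $y\cdot f(x,z)\leq f(x\cdot f(x,y),z)$; (ABT3) $f(x,g(x,-y)\cdot y)\leq y$; (wMIA) $x\neq0,y\neq0\Rightarrow g(x,y)\leq f(x,y)$; (ABTW) $a\neq0\Rightarrow g(a,a)\leq a$; (ABT2$^{\mathrm s}$) $b\neq0\Rightarrow a\leq f(a,b)$. Betweenness algebra: (ABT0),(ABT1$_f$),(ABT1$_g$),(ABT2),(ABT3),(wMIA).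 Weak betweenness algebra: (ABT0),(ABT1$_f$),(ABT1$_g$),(ABT2),(ABTW). Strong betweenness algebra: (ABT1$_f$),(ABT1$_g$),(ABT3),(wMIA),(ABT2$^{\mathrm s}$). $\mathrm{Ult}(A)$ is the set of ultrafilters of $A$; $Q_f(\mathcal U_1,\mathcal U_2,\mathcal U_3)\iff f[\mathcal U_1\times\mathcal U_3]\subseteq\mathcal U_2$; $S_g(\mathcal U_1,\mathcal U_2,\mathcal U_3)\iff g[\mathcal U_1\times\mathcal U_3]\cap\mathcal U_2\neq\emptyset$. For a ternary relation $R$ on a set $W$ and $X,Y\subseteq W$: $\langle R\rangle(X,Y)=\{u\in W\mid\exists x\in X\,\exists y\in Y\,R(x,u,y)\}$ and $[\![R]\!](X,Y)=\{u\in W\mid\forall x\in X\,\forall y\in Y\,R(x,u,y)\}$. An embedding is an injective map preserving the Boolean operations and $f,g$. *)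

theory Defs
  imports Main
begin

text \<open>A Boolean algebra with at least two elements, given as carrier C with
  join jn (+), meet mt (\<cdot>), complement cp (-), zero z and unit u
  (axiomatised as a complemented distributive lattice).\<close>

definition bool_alg ::
  "'b set \<Rightarrow> ('b \<Rightarrow> 'b \<Rightarrow> 'b) \<Rightarrow> ('b \<Rightarrow> 'b \<Rightarrow> 'b) \<Rightarrow> ('b \<Rightarrow> 'b) \<Rightarrow> 'b \<Rightarrow> 'b \<Rightarrow> bool" where
  "bool_alg C jn mt cp z u \<longleftrightarrow>
     z \<in> C \<and> u \<in> C \<and> z \<noteq> u \<and>
     (\<forall>x\<in>C. \<forall>y\<in>C. jn x y \<in> C \<and> mt x y \<in> C) \<and> (\<forall>x\<in>C. cp x \<in> C) \<and>
     (\<forall>x\<in>C. \<forall>y\<in>C. jn x y = jn y x \<and> mt x y = mt y x) \<and>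
     (\<forall>x\<in>C. \<forall>y\<in>C. \<forall>w\<in>C. jn (jn x y) w = jn x (jn y w) \<and> mt (mt x y) w = mt x (mt y w)) \<and>
     (\<forall>x\<in>C. \<forall>y\<in>C. jn x (mt x y) = x \<and> mt x (jn x y) = x) \<and>
     (\<forall>x\<in>C. \<forall>y\<in>C. \<forall>w\<in>C. mt x (jn y w) = jn (mt x y) (mt x w) \<and>
                           jn x (mt y w) = mt (jn x y) (jn x w)) \<and>
     (\<forall>x\<in>C. jn x (cp x) = u \<and> mt x (cp x) = z)"

definition ba_le :: "('b \<Rightarrow> 'b \<Rightarrow> 'b) \<Rightarrow> 'b \<Rightarrow> 'b \<Rightarrow> bool" where
  "ba_le mt x y \<longleftrightarrow> mt x y = x"

definition ps_alg ::
  "'b set \<Rightarrow> ('b \<Rightarrow> 'b \<Rightarrow> 'b) \<Rightarrow> ('b \<Rightarrow> 'b \<Rightarrow> 'b) \<Rightarrow> ('b \<Rightarrow> 'b) \<Rightarrow> 'b \<Rightarrow> 'b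
    \<Rightarrow> ('b \<Rightarrow> 'b \<Rightarrow> 'b) \<Rightarrow> ('b \<Rightarrow> 'b \<Rightarrow> 'b) \<Rightarrow> bool" where
  "ps_alg C jn mt cp z u f g \<longleftrightarrow>
     bool_alg C jn mt cp z u \<and>
     (\<forall>x\<in>C. \<forall>y\<in>C. f x y \<in> C \<and> g x y \<in> C) \<and>
     (\<forall>x\<in>C. \<forall>y\<in>C. (x = z \<or> y = z) \<longrightarrow> f x y = z) \<and>
     (\<forall>x\<in>C. \<forall>x'\<in>C. \<forall>y\<in>C. f (jn x x') y = jn (f x y) (f x' y) \<and> f y (jn x x') = jn (f y x) (f y x')) \<and>
     (\<forall>x\<in>C. \<forall>y\<in>C. (x = z \<or> y = z) \<longrightarrow> g x y = u) \<and>
     (\<forall>x\<in>C. \<forall>x'\<in>C. \<forall>y\<in>C. g (jn x x') y = mt (g x y) (g x' y) \<and> g y (jn x x') = mt (g y x) (g y x'))"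

definition ABT0 where
  "ABT0 C mt f \<longleftrightarrow> (\<forall>x\<in>C. ba_le mt x (f x x))"
definition ABT1 where
  "ABT1 C mt f \<longleftrightarrow> (\<forall>x\<in>C. \<forall>y\<in>C. ba_le mt (f x y) (f y x))"
definition ABT2 where
  "ABT2 C mt f \<longleftrightarrow> (\<forall>x\<in>C. \<forall>y\<in>C. \<forall>w\<in>C. ba_le mt (mt y (f x w)) (f (mt x (f x y)) w))"
definition ABT3 where
  "ABT3 C mt cp f g \<longleftrightarrow> (\<forall>x\<in>C. \<forall>y\<in>C. ba_le mt (f x (mt (g x (cp y)) y)) y)"
definition wMIA where
  "wMIA C mt z f g \<longleftrightarrow> (\<forall>x\<in>C. \<forall>y\<in>C. x \<noteq> z \<and> y \<noteq> z \<longrightarrow> ba_le mt (g x y) (f x y))"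
definition ABTW where
  "ABTW C mt z g \<longleftrightarrow> (\<forall>a\<in>C. a \<noteq> z \<longrightarrow> ba_le mt (g a a) a)"
definition ABT2s where
  "ABT2s C mt z f \<longleftrightarrow> (\<forall>a\<in>C. \<forall>b\<in>C. b \<noteq> z \<longrightarrow> ba_le mt a (f a b))"

definition betw_alg where
  "betw_alg C jn mt cp z u f g \<longleftrightarrow> ps_alg C jn mt cp z u f g \<and>
     ABT0 C mt f \<and> ABT1 C mt f \<and> ABT1 C mt g \<and> ABT2 C mt f \<and> ABT3 C mt cp f g \<and> wMIA C mt z f g"

definition weak_betw_alg where
  "weak_betw_alg C jn mt cp z u f g \<longleftrightarrow> ps_alg C jn mt cp z u f g \<and>
     ABT0 C mt f \<and> ABT1 C mt f \<and> ABT1 C mt g \<and> ABT2 C mt f \<and> ABTW C mt z g"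

definition strong_betw_alg where
  "strong_betw_alg C jn mt cp z u f g \<longleftrightarrow> ps_alg C jn mt cp z u f g \<and>
     ABT1 C mt f \<and> ABT1 C mt g \<and> ABT3 C mt cp f g \<and> wMIA C mt z f g \<and> ABT2s C mt z f"

definition ps_embedding where
  "ps_embedding C jn mt cp z u f g C' jn' mt' cp' z' u' f' g' h \<longleftrightarrow>
     (\<forall>x\<in>C. h x \<in> C') \<and> inj_on h C \<and>
     (\<forall>x\<in>C. \<forall>y\<in>C. h (jn x y) = jn' (h x) (h y) \<and> h (mt x y) = mt' (h x) (h y)) \<and>
     (\<forall>x\<in>C. h (cp x) = cp' (h x)) \<and> h z = z' \<and> h u = u' \<and>
     (\<forall>x\<in>C. \<forall>y\<in>C. h (f x y) = f' (h x) (h y) \<and> h (g x y) = g' (h x) (h y))"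

definition is_ultrafilter :: "'a::boolean_algebra set \<Rightarrow> bool" where
  "is_ultrafilter U \<longleftrightarrow> top \<in> U \<and> bot \<notin> U \<and>
     (\<forall>x y. x \<in> U \<and> y \<in> U \<longrightarrow> inf x y \<in> U) \<and>
     (\<forall>x y. x \<in> U \<and> x \<le> y \<longrightarrow> y \<in> U) \<and>
     (\<forall>x. x \<in> U \<or> - x \<in> U)"

definition Ult :: "'a::boolean_algebra set set" where
  "Ult = {U. is_ultrafilter U}"

definition Q_rel :: "('a \<Rightarrow> 'a \<Rightarrow> 'a) \<Rightarrow> 'a set \<Rightarrow> 'a set \<Rightarrow> 'a set \<Rightarrow> bool" where
  "Q_rel f U1 U2 U3 \<longleftrightarrow> (\<forall>x\<in>U1. \<forall>y\<in>U3. f x y \<in> U2)"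

definition S_rel :: "('a \<Rightarrow> 'a \<Rightarrow> 'a) \<Rightarrow> 'a set \<Rightarrow> 'a set \<Rightarrow> 'a set \<Rightarrow> bool" where
  "S_rel g U1 U2 U3 \<longleftrightarrow> (\<exists>x\<in>U1. \<exists>y\<in>U3. g x y \<in> U2)"

definition dia :: "('w \<Rightarrow> 'w \<Rightarrow> 'w \<Rightarrow> bool) \<Rightarrow> 'w set \<Rightarrow> 'w set \<Rightarrow> 'w set \<Rightarrow> 'w set" where
  "dia R W X Y = {u \<in> W. \<exists>x\<in>X. \<exists>y\<in>Y. R x u y}"

definition nec :: "('w \<Rightarrow> 'w \<Rightarrow> 'w \<Rightarrow> bool) \<Rightarrow> 'w set \<Rightarrow> 'w set \<Rightarrow> 'w set \<Rightarrow> 'w set" where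
  "nec R W X Y = {u \<in> W. \<forall>x\<in>X. \<forall>y\<in>Y. R x u y}"

definition stone :: "'a::boolean_algebra \<Rightarrow> 'a set set" where
  "stone x = {U \<in> Ult. x \<in> U}"

end

theory Submission
  imports Defs
begin

text \<open>The Boolean part is Stone's representation theorem, via the prime ideal theorem:
  an element outside a lattice ideal lies in an ultrafilter disjoint from it (Zorn).
  For normal additive f, every ultrafilter U with f x y \<in> U is the middle point of a
  Q_f-triple whose outer ultrafilters contain x and y: extend x, then y, away from the
  ideals of elements that f sends outside U. Since - g x y is normal additive and, at
  ultrafilters, S_g is the complement of Q_(-g), the Stone map preserves g as well.
  Each axiom is canonical: on ultrafilters it yields a first-order property of Q_f and
  S_g, which in turn makes the complex algebra satisfy the axiom.\<close>

lemma ultrafilter_inf_iff: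
  "is_ultrafilter U \<Longrightarrow> inf a b \<in> U \<longleftrightarrow> a \<in> U \<and> b \<in> U"
  unfolding is_ultrafilter_def by (meson inf_le1 inf_le2)

lemma ultrafilter_mono: "is_ultrafilter U \<Longrightarrow> a \<in> U \<Longrightarrow> a \<le> b \<Longrightarrow> b \<in> U"
  unfolding is_ultrafilter_def by blast

lemma ultrafilter_top: "is_ultrafilter U \<Longrightarrow> top \<in> U"
  unfolding is_ultrafilter_def by blast

lemma ultrafilter_bot: "is_ultrafilter U \<Longrightarrow> bot \<notin> U"
  unfolding is_ultrafilter_def by blast

lemma ultrafilter_compl_iff: "is_ultrafilter U \<Longrightarrow> - a \<in> U \<longleftrightarrow> a \<notin> U"
  using ultrafilter_inf_iff[of U a "- a"] ultrafilter_bot[of U]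
  unfolding is_ultrafilter_def by auto

lemma ultrafilter_sup_iff: "is_ultrafilter U \<Longrightarrow> sup a b \<in> U \<longleftrightarrow> a \<in> U \<or> b \<in> U"
  using ultrafilter_inf_iff[of U "- a" "- b"] ultrafilter_compl_iff[of U]
  by (metis compl_sup)

lemma ultrafilter_subset_eq:
  "is_ultrafilter U \<Longrightarrow> is_ultrafilter V \<Longrightarrow> U \<subseteq> V \<Longrightarrow> U = V"
  by (metis subsetD subsetI subset_antisym ultrafilter_compl_iff)

lemma ultrafilters_separated:
  "is_ultrafilter U \<Longrightarrow> is_ultrafilter V \<Longrightarrow> U \<noteq> V \<Longrightarrow> \<exists>d\<in>U. - d \<in> V"
  by (metis subsetI ultrafilter_compl_iff ultrafilter_subset_eq)

definition lattice_filter :: "'a::boolean_algebra set \<Rightarrow> bool" where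
  "lattice_filter F \<longleftrightarrow> top \<in> F \<and> (\<forall>x y. x \<in> F \<and> y \<in> F \<longrightarrow> inf x y \<in> F) \<and>
     (\<forall>x y. x \<in> F \<and> x \<le> y \<longrightarrow> y \<in> F)"

definition lattice_ideal :: "'a::boolean_algebra set \<Rightarrow> bool" where
  "lattice_ideal I \<longleftrightarrow> bot \<in> I \<and> (\<forall>x y. x \<in> I \<and> y \<in> I \<longrightarrow> sup x y \<in> I) \<and>
     (\<forall>x y. y \<in> I \<and> x \<le> y \<longrightarrow> x \<in> I)"

lemma lattice_filter_insert:
  assumes "lattice_filter F"
  shows "lattice_filter {c. \<exists>d\<in>F. inf d a \<le> c}"
  unfolding lattice_filter_def
proof (intro conjI allI impI)
  show "top \<in> {c. \<exists>d\<in>F. inf d a \<le> c}"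
    using assms unfolding lattice_filter_def by auto
next
  fix p q assume "p \<in> {c. \<exists>d\<in>F. inf d a \<le> c} \<and> q \<in> {c. \<exists>d\<in>F. inf d a \<le> c}"
  then obtain d e where "d \<in> F" "e \<in> F" "inf d a \<le> p" "inf e a \<le> q" by blast
  moreover from this have "inf (inf d e) a \<le> inf p q"
    by (meson inf_le1 inf_le2 le_infI order_trans inf_mono)
  ultimately show "inf p q \<in> {c. \<exists>d\<in>F. inf d a \<le> c}"
    using assms unfolding lattice_filter_def by blast
qed (use order_trans in blast)

lemma maximal_filter_is_ultrafilter:
  assumes M: "lattice_filter M" and I: "lattice_ideal I" and disj: "M \<inter> I = {}"
    and maximal: "\<And>N. lattice_filter N \<Longrightarrow> M \<subseteq> N \<Longrightarrow> N \<inter> I = {} \<Longrightarrow> N = M"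
  shows "is_ultrafilter M"
proof -
  have meets_ideal: "\<exists>d\<in>M. inf d a \<in> I" if "a \<notin> M" for a
  proof (rule ccontr)
    assume none: "\<not> (\<exists>d\<in>M. inf d a \<in> I)"
    define N where "N = {c. \<exists>d\<in>M. inf d a \<le> c}"
    have "N \<inter> I = {}"
      using none I unfolding N_def lattice_ideal_def by blast
    moreover have "M \<subseteq> N"
      unfolding N_def by (blast intro: inf_le1)
    ultimately have "N = M"
      using maximal lattice_filter_insert[OF M] unfolding N_def by blast
    moreover have "a \<in> N"
      using M unfolding N_def lattice_filter_def by (blast intro: inf_le2)
    ultimately show False using \<open>a \<notin> M\<close> by blast
  qed
  have "a \<in> M \<or> - a \<in> M" for a
  proof (rule ccontr)
    assume "\<not> (a \<in> M \<or> - a \<in> M)"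
    then obtain d e where d: "d \<in> M" "inf d a \<in> I" and e: "e \<in> M" "inf e (- a) \<in> I"
      using meets_ideal by blast
    have "inf d e = sup (inf (inf d e) a) (inf (inf d e) (- a))"
      by (simp flip: inf_sup_distrib1)
    also have "\<dots> \<le> sup (inf d a) (inf e (- a))"
      by (intro sup_mono inf_mono) simp_all
    finally have "inf d e \<in> I"
      using d e I unfolding lattice_ideal_def by blast
    moreover have "inf d e \<in> M" using d e M unfolding lattice_filter_def by blast
    ultimately show False using disj by blast
  qed
  then show ?thesis
    using M I disj unfolding is_ultrafilter_def lattice_filter_def lattice_ideal_def by blast
qed

lemma ultrafilter_avoiding_ideal:
  fixes x :: "'a::boolean_algebra"
  assumes I: "lattice_ideal I" and "x \<notin> I"
  shows "\<exists>U. is_ultrafilter U \<and> x \<in> U \<and> U \<inter> I = {}"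
proof -
  define A where "A = {F. lattice_filter F \<and> x \<in> F \<and> F \<inter> I = {}}"
  have "\<exists>M\<in>A. \<forall>N\<in>A. M \<subseteq> N \<longrightarrow> N = M"
  proof (rule subset_Zorn_nonempty)
    have "{c. x \<le> c} \<in> A"
      using assms unfolding A_def lattice_filter_def lattice_ideal_def by auto
    then show "A \<noteq> {}" by blast
  next
    fix C assume "C \<noteq> {}" and "subset.chain A C"
    then have CA: "C \<subseteq> A" and chain: "\<And>X Y. X \<in> C \<Longrightarrow> Y \<in> C \<Longrightarrow> X \<subseteq> Y \<or> Y \<subseteq> X"
      by (auto simp: pred_on.chain_def)
    have "lattice_filter (\<Union>C)"
      unfolding lattice_filter_def
    proof (intro conjI allI impI)
      show "top \<in> \<Union>C" using \<open>C \<noteq> {}\<close> CA unfolding A_def lattice_filter_def by blast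
    next
      fix a b assume "a \<in> \<Union>C \<and> b \<in> \<Union>C"
      then obtain X Y where "X \<in> C" "Y \<in> C" "a \<in> X" "b \<in> Y" by blast
      then show "inf a b \<in> \<Union>C"
        using chain[of X Y] CA unfolding A_def lattice_filter_def by blast
    next
      fix a b assume "a \<in> \<Union>C \<and> a \<le> b"
      then show "b \<in> \<Union>C" using CA unfolding A_def lattice_filter_def by blast
    qed
    then show "\<Union>C \<in> A" using \<open>C \<noteq> {}\<close> CA unfolding A_def by blast
  qed
  then obtain M where "M \<in> A" and maximal: "\<And>N. N \<in> A \<Longrightarrow> M \<subseteq> N \<Longrightarrow> N = M" by blast
  have M: "lattice_filter M" "x \<in> M" "M \<inter> I = {}" using \<open>M \<in> A\<close> unfolding A_def by auto
  have "is_ultrafilter M"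
  proof (rule maximal_filter_is_ultrafilter[OF M(1) I M(3)])
    fix N assume "lattice_filter N" "M \<subseteq> N" "N \<inter> I = {}"
    then show "N = M" using maximal M(2) unfolding A_def by blast
  qed
  then show ?thesis using M by blast
qed

lemma ultrafilter_exists: "(x::'a::boolean_algebra) \<noteq> bot \<Longrightarrow> \<exists>U. is_ultrafilter U \<and> x \<in> U"
  using ultrafilter_avoiding_ideal[of "{bot}" x] by (simp add: lattice_ideal_def bot_unique) blast

lemma Ult_iff: "U \<in> Ult \<longleftrightarrow> is_ultrafilter U"
  by (simp add: Ult_def)

lemma Ult_nonempty: "(bot::'a::boolean_algebra) \<noteq> top \<Longrightarrow> (Ult :: 'a set set) \<noteq> {}"
  using ultrafilter_exists[of "top::'a"] by (auto simp: Ult_iff)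

lemma stone_subset_Ult: "stone x \<subseteq> Ult"
  unfolding stone_def by blast

lemma stone_sup: "stone (sup x y) = stone x \<union> stone y"
  unfolding stone_def Ult_def by (auto simp: ultrafilter_sup_iff)

lemma stone_inf: "stone (inf x y) = stone x \<inter> stone y"
  unfolding stone_def Ult_def by (auto simp: ultrafilter_inf_iff)

lemma stone_compl: "stone (- x) = Ult - stone x"
  unfolding stone_def Ult_def by (auto simp: ultrafilter_compl_iff)

lemma stone_bot: "stone bot = {}"
  unfolding stone_def Ult_def by (auto simp: ultrafilter_bot)

lemma stone_top: "stone top = Ult"
  unfolding stone_def Ult_def by (auto simp: ultrafilter_top)

lemma stone_eq_empty_iff: "stone x = {} \<longleftrightarrow> x = bot"
  using ultrafilter_exists[of x] unfolding stone_def Ult_def by (auto simp: ultrafilter_bot)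

lemma inj_stone: "inj (stone :: 'a::boolean_algebra \<Rightarrow> _)"
proof (rule injI)
  fix x y :: 'a assume "stone x = stone y"
  then have "stone (inf x (- y)) = {}" "stone (inf y (- x)) = {}"
    by (auto simp: stone_inf stone_compl)
  then have "x \<le> y" "y \<le> x"
    by (simp_all add: stone_eq_empty_iff inf_shunt)
  then show "x = y" by simp
qed

definition normal_additive :: "('a::boolean_algebra \<Rightarrow> 'a \<Rightarrow> 'a) \<Rightarrow> bool" where
  "normal_additive f \<longleftrightarrow> (\<forall>x y. f bot y = bot \<and> f x bot = bot) \<and>
     (\<forall>x x' y. f (sup x x') y = sup (f x y) (f x' y) \<and> f y (sup x x') = sup (f y x) (f y x'))"

lemma normal_additive_mono_left: "normal_additive f \<Longrightarrow> a \<le> a' \<Longrightarrow> f a b \<le> f a' b"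
  unfolding normal_additive_def by (metis sup.absorb_iff2)

lemma normal_additive_mono_right: "normal_additive f \<Longrightarrow> b \<le> b' \<Longrightarrow> f a b \<le> f a b'"
  unfolding normal_additive_def by (metis sup.absorb_iff2)

lemma normal_additive_mono:
  "normal_additive f \<Longrightarrow> a \<le> a' \<Longrightarrow> b \<le> b' \<Longrightarrow> f a b \<le> f a' b'"
  by (meson normal_additive_mono_left normal_additive_mono_right order_trans)

lemma dual_normal_additive_antimono:
  "normal_additive (\<lambda>x y. - g x y) \<Longrightarrow> a \<le> a' \<Longrightarrow> b \<le> b' \<Longrightarrow> g a' b' \<le> g a b"
  using normal_additive_mono[of "\<lambda>x y. - g x y" a a' b b'] by simp

lemma ps_alg_normal_additive:
  fixes f g :: "'a::boolean_algebra \<Rightarrow> 'a \<Rightarrow> 'a"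
  assumes "ps_alg UNIV sup inf uminus bot top f g"
  shows "normal_additive f" "normal_additive (\<lambda>x y. - g x y)" "(bot::'a) \<noteq> top"
  using assms unfolding ps_alg_def normal_additive_def bool_alg_def by auto

lemma lattice_ideal_outside_left:
  assumes "normal_additive f" and U: "is_ultrafilter U"
  shows "lattice_ideal {a. f a y \<notin> U}"
  using assms ultrafilter_bot[OF U] ultrafilter_sup_iff[OF U] ultrafilter_mono[OF U]
    normal_additive_mono_left[OF assms(1)]
  unfolding lattice_ideal_def normal_additive_def by (simp, blast)

lemma lattice_ideal_outside_right:
  assumes f: "normal_additive f" and U: "is_ultrafilter U" and V: "is_ultrafilter V"
  shows "lattice_ideal {b. \<exists>a\<in>V. f a b \<notin> U}"
  unfolding lattice_ideal_def
proof (intro conjI allI impI)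
  show "bot \<in> {b. \<exists>a\<in>V. f a b \<notin> U}"
    using f ultrafilter_bot[OF U] ultrafilter_top[OF V] unfolding normal_additive_def by auto
next
  fix b b' assume "b \<in> {b. \<exists>a\<in>V. f a b \<notin> U} \<and> b' \<in> {b. \<exists>a\<in>V. f a b \<notin> U}"
  then obtain a a' where a: "a \<in> V" "f a b \<notin> U" and a': "a' \<in> V" "f a' b' \<notin> U" by blast
  have "f (inf a a') b \<notin> U" "f (inf a a') b' \<notin> U"
    using a a' ultrafilter_mono[OF U] normal_additive_mono_left[OF f] by (meson inf_le1 inf_le2)+
  then have "f (inf a a') (sup b b') \<notin> U"
    using f ultrafilter_sup_iff[OF U] unfolding normal_additive_def by simp
  then show "sup b b' \<in> {b. \<exists>a\<in>V. f a b \<notin> U}"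
    using a a' ultrafilter_inf_iff[OF V] by blast
qed (use ultrafilter_mono[OF U] normal_additive_mono_right[OF f] in blast)

lemma Q_rel_through_ultrafilter:
  assumes f: "normal_additive f" and U: "is_ultrafilter U" and "f x y \<in> U"
  shows "\<exists>U1 U3. is_ultrafilter U1 \<and> is_ultrafilter U3 \<and> x \<in> U1 \<and> y \<in> U3 \<and> Q_rel f U1 U U3"
proof -
  obtain U1 where U1: "is_ultrafilter U1" "x \<in> U1" and "\<And>a. a \<in> U1 \<Longrightarrow> f a y \<in> U"
    using ultrafilter_avoiding_ideal[OF lattice_ideal_outside_left[OF f U, of y]] \<open>f x y \<in> U\<close>
    by blast
  moreover obtain U3 where "is_ultrafilter U3" "y \<in> U3" "\<And>a b. a \<in> U1 \<Longrightarrow> b \<in> U3 \<Longrightarrow> f a b \<in> U"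
    using ultrafilter_avoiding_ideal[OF lattice_ideal_outside_right[OF f U U1(1)], of y] calculation
    by blast
  ultimately show ?thesis unfolding Q_rel_def by blast
qed

lemma stone_dia:
  assumes "normal_additive f"
  shows "stone (f x y) = dia (Q_rel f) Ult (stone x) (stone y)"
proof
  show "stone (f x y) \<subseteq> dia (Q_rel f) Ult (stone x) (stone y)"
    using Q_rel_through_ultrafilter[OF assms]
    unfolding stone_def dia_def Ult_iff by blast
qed (auto simp: stone_def dia_def Q_rel_def)

lemma S_rel_iff_not_Q_rel_dual:
  "is_ultrafilter U \<Longrightarrow> S_rel g U1 U U3 \<longleftrightarrow> \<not> Q_rel (\<lambda>x y. - g x y) U1 U U3"
  unfolding S_rel_def Q_rel_def by (auto simp: ultrafilter_compl_iff)

lemma stone_nec: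
  assumes g: "normal_additive (\<lambda>x y. - g x y)"
  shows "stone (g x y) = nec (S_rel g) Ult (stone x) (stone y)"
proof -
  have "stone (g x y) = Ult - stone (- g x y)"
    using stone_compl[of "- g x y"] by simp
  also have "\<dots> = Ult - dia (Q_rel (\<lambda>x y. - g x y)) Ult (stone x) (stone y)"
    using stone_dia[OF g, of x y] by simp
  also have "\<dots> = nec (S_rel g) Ult (stone x) (stone y)"
    unfolding dia_def nec_def by (auto simp: S_rel_iff_not_Q_rel_dual Ult_iff)
  finally show ?thesis .
qed

lemma stone_ps_embedding:
  fixes f g :: "'a::boolean_algebra \<Rightarrow> 'a \<Rightarrow> 'a"
  assumes "ps_alg UNIV sup inf uminus bot top f g"
  shows "ps_embedding UNIV sup inf uminus bot top f g
    (Pow Ult) (\<union>) (\<inter>) (\<lambda>X. Ult - X) {} Ult (dia (Q_rel f) Ult) (nec (S_rel g) Ult) stone"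
  unfolding ps_embedding_def
  by (simp add: stone_subset_Ult inj_stone stone_sup stone_inf stone_compl stone_bot stone_top
      stone_dia[OF ps_alg_normal_additive(1)[OF assms]]
      stone_nec[OF ps_alg_normal_additive(2)[OF assms]])

lemma complex_ps_alg:
  fixes f g :: "'a::boolean_algebra \<Rightarrow> 'a \<Rightarrow> 'a"
  assumes "ps_alg UNIV sup inf uminus bot top f g"
  shows "ps_alg (Pow Ult) (\<union>) (\<inter>) (\<lambda>X. Ult - X) {} Ult (dia (Q_rel f) Ult) (nec (S_rel g) Ult)"
  using Ult_nonempty[OF ps_alg_normal_additive(3)[OF assms]]
  unfolding ps_alg_def bool_alg_def by (auto simp: dia_def nec_def)

lemma ba_le_iff_le: "ba_le inf (x::'a::boolean_algebra) y \<longleftrightarrow> x \<le> y"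
  unfolding ba_le_def by (simp add: inf.absorb_iff1)

lemma ba_le_iff_subset: "ba_le (\<inter>) X Y \<longleftrightarrow> X \<subseteq> Y"
  unfolding ba_le_def by blast

lemma ABT0_Q_rel_refl:
  assumes f: "normal_additive f" and "ABT0 UNIV inf f" and U: "is_ultrafilter U"
  shows "Q_rel f U U U"
  unfolding Q_rel_def
proof (intro ballI)
  fix a b assume "a \<in> U" "b \<in> U"
  then have "inf a b \<in> U" using ultrafilter_inf_iff[OF U] by blast
  moreover have "inf a b \<le> f (inf a b) (inf a b)"
    using \<open>ABT0 UNIV inf f\<close> unfolding ABT0_def ba_le_iff_le by blast
  moreover have "f (inf a b) (inf a b) \<le> f a b"
    by (rule normal_additive_mono[OF f]) simp_all
  ultimately show "f a b \<in> U" using ultrafilter_mono[OF U] by (meson order_trans)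
qed

lemma ABT1_Q_rel_sym:
  "ABT1 UNIV inf f \<Longrightarrow> is_ultrafilter U2 \<Longrightarrow> Q_rel f U1 U2 U3 \<Longrightarrow> Q_rel f U3 U2 U1"
  unfolding Q_rel_def ABT1_def ba_le_iff_le by (meson UNIV_I ultrafilter_mono)

lemma ABT1_S_rel_sym:
  "ABT1 UNIV inf g \<Longrightarrow> is_ultrafilter U2 \<Longrightarrow> S_rel g U1 U2 U3 \<Longrightarrow> S_rel g U3 U2 U1"
  unfolding S_rel_def ABT1_def ba_le_iff_le by (meson UNIV_I ultrafilter_mono)

lemma ABT2_Q_rel_shift:
  assumes f: "normal_additive f" and ABT2: "ABT2 UNIV inf f" and X: "is_ultrafilter X"
    and U: "is_ultrafilter U" and Z: "is_ultrafilter Z" and Q: "Q_rel f X U Z"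
  shows "Q_rel f X X U"
  unfolding Q_rel_def
proof (intro ballI)
  fix a b assume "a \<in> X" "b \<in> U"
  show "f a b \<in> X"
  proof (rule ccontr)
    assume "f a b \<notin> X"
    define a' where "a' = inf a (- f a b)"
    have "a' \<in> X"
      using \<open>a \<in> X\<close> \<open>f a b \<notin> X\<close> ultrafilter_inf_iff[OF X] ultrafilter_compl_iff[OF X]
      unfolding a'_def by blast
    then have "inf b (f a' top) \<in> U"
      using Q \<open>b \<in> U\<close> ultrafilter_top[OF Z] ultrafilter_inf_iff[OF U] unfolding Q_rel_def by blast
    have "a' \<le> a" "a' \<le> - f a b" unfolding a'_def by simp_all
    then have "inf a' (f a' b) \<le> inf (- f a b) (f a b)"
      by (intro inf_mono normal_additive_mono_left[OF f])
    then have "inf a' (f a' b) = bot" by (simp add: bot_unique)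
    moreover have "inf b (f a' top) \<le> f (inf a' (f a' b)) top"
      using ABT2 unfolding ABT2_def ba_le_iff_le by blast
    ultimately have "inf b (f a' top) = bot"
      using f unfolding normal_additive_def by (simp add: bot_unique)
    then show False using \<open>inf b (f a' top) \<in> U\<close> ultrafilter_bot[OF U] by simp
  qed
qed

lemma ABT3_Q_S_rel_eq:
  assumes g: "normal_additive (\<lambda>x y. - g x y)" and ABT3: "ABT3 UNIV inf uminus f g"
    and U: "is_ultrafilter U" and Y: "is_ultrafilter Y"
    and Q: "Q_rel f X U Y" and S: "S_rel g X Y U"
  shows "U = Y"
proof (rule ccontr)
  assume "U \<noteq> Y"
  then obtain d where "d \<in> U" "- d \<in> Y" using ultrafilters_separated[OF U Y] by blast
  obtain a b where "a \<in> X" "b \<in> U" "g a b \<in> Y" using S unfolding S_rel_def by blast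
  define c where "c = inf b d"
  have "c \<in> U" unfolding c_def using \<open>b \<in> U\<close> \<open>d \<in> U\<close> ultrafilter_inf_iff[OF U] by blast
  have "g a b \<le> g a c" unfolding c_def by (rule dual_normal_additive_antimono[OF g]) simp_all
  then have "inf (g a (- (- c))) (- c) \<in> Y"
    using \<open>g a b \<in> Y\<close> \<open>- d \<in> Y\<close> ultrafilter_mono[OF Y] ultrafilter_inf_iff[OF Y]
    unfolding c_def by simp
  then have "f a (inf (g a (- (- c))) (- c)) \<in> U"
    using Q \<open>a \<in> X\<close> unfolding Q_rel_def by blast
  moreover have "f a (inf (g a (- (- c))) (- c)) \<le> - c"
    using ABT3 unfolding ABT3_def ba_le_iff_le by blast
  ultimately show False
    using \<open>c \<in> U\<close> ultrafilter_mono[OF U] ultrafilter_compl_iff[OF U] by blast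
qed

lemma wMIA_S_rel_imp_Q_rel:
  assumes f: "normal_additive f" and g: "normal_additive (\<lambda>x y. - g x y)"
    and wMIA: "wMIA UNIV inf bot f g"
    and X: "is_ultrafilter X" and U: "is_ultrafilter U" and Y: "is_ultrafilter Y"
    and S: "S_rel g X U Y"
  shows "Q_rel f X U Y"
  unfolding Q_rel_def
proof (intro ballI)
  obtain a b where "a \<in> X" "b \<in> Y" "g a b \<in> U" using S unfolding S_rel_def by blast
  fix a' b' assume "a' \<in> X" "b' \<in> Y"
  then have "inf a a' \<in> X" "inf b b' \<in> Y"
    using \<open>a \<in> X\<close> \<open>b \<in> Y\<close> ultrafilter_inf_iff[OF X] ultrafilter_inf_iff[OF Y] by blast+
  have "g a b \<le> g (inf a a') (inf b b')"
    by (rule dual_normal_additive_antimono[OF g]) simp_all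
  also have "\<dots> \<le> f (inf a a') (inf b b')"
    using wMIA \<open>inf a a' \<in> X\<close> \<open>inf b b' \<in> Y\<close> ultrafilter_bot[OF X] ultrafilter_bot[OF Y]
    unfolding wMIA_def ba_le_iff_le by (metis UNIV_I)
  also have "\<dots> \<le> f a' b'"
    by (rule normal_additive_mono[OF f]) simp_all
  finally show "f a' b' \<in> U" using \<open>g a b \<in> U\<close> ultrafilter_mono[OF U] by blast
qed

lemma ABTW_S_rel_eq:
  assumes g: "normal_additive (\<lambda>x y. - g x y)" and ABTW: "ABTW UNIV inf bot g"
    and X: "is_ultrafilter X" and U: "is_ultrafilter U" and S: "S_rel g X U X"
  shows "U = X"
proof -
  obtain a b where "a \<in> X" "b \<in> X" "g a b \<in> U" using S unfolding S_rel_def by blast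
  have "X \<subseteq> U"
  proof
    fix d assume "d \<in> X"
    define c where "c = inf (inf a b) d"
    have "c \<in> X" unfolding c_def using \<open>a \<in> X\<close> \<open>b \<in> X\<close> \<open>d \<in> X\<close> ultrafilter_inf_iff[OF X] by blast
    have "g a b \<le> g c c"
      unfolding c_def by (rule dual_normal_additive_antimono[OF g]) (meson inf_le1 inf_le2 order_trans)+
    also have "\<dots> \<le> c"
      using ABTW \<open>c \<in> X\<close> ultrafilter_bot[OF X] unfolding ABTW_def ba_le_iff_le by (metis UNIV_I)
    also have "\<dots> \<le> d" unfolding c_def by simp
    finally show "d \<in> U" using \<open>g a b \<in> U\<close> ultrafilter_mono[OF U] by blast
  qed
  then show ?thesis using ultrafilter_subset_eq[OF X U] by simp
qed

lemma ABT2s_Q_rel: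
  assumes "ABT2s UNIV inf bot f" and X: "is_ultrafilter X" and Y: "is_ultrafilter Y"
  shows "Q_rel f X X Y"
  using assms ultrafilter_bot[OF Y] ultrafilter_mono[OF X]
  unfolding Q_rel_def ABT2s_def ba_le_iff_le by (metis UNIV_I)

lemma complex_ABT0:
  assumes "normal_additive f" "ABT0 UNIV inf f"
  shows "ABT0 (Pow Ult) (\<inter>) (dia (Q_rel f) Ult)"
  unfolding ABT0_def ba_le_iff_subset dia_def
  using ABT0_Q_rel_refl[OF assms] by (auto simp: Ult_def)

lemma complex_ABT1_dia:
  assumes "ABT1 UNIV inf f"
  shows "ABT1 (Pow Ult) (\<inter>) (dia (Q_rel f) Ult)"
  unfolding ABT1_def ba_le_iff_subset dia_def
  using ABT1_Q_rel_sym[OF assms] by (auto simp: Ult_def) blast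

lemma complex_ABT1_nec:
  assumes "ABT1 UNIV inf g"
  shows "ABT1 (Pow Ult) (\<inter>) (nec (S_rel g) Ult)"
  unfolding ABT1_def ba_le_iff_subset nec_def
  using ABT1_S_rel_sym[OF assms] by (auto simp: Ult_def)

lemma complex_ABT2:
  assumes f: "normal_additive f" and "ABT2 UNIV inf f"
  shows "ABT2 (Pow Ult) (\<inter>) (dia (Q_rel f) Ult)"
  unfolding ABT2_def ba_le_iff_subset
proof (intro ballI subsetI)
  fix X Y Z U assume "X \<in> Pow Ult" "Y \<in> Pow Ult" "Z \<in> Pow Ult"
    and "U \<in> Y \<inter> dia (Q_rel f) Ult X Z"
  then obtain V W where "V \<in> X" "W \<in> Z" "Q_rel f V U W" "U \<in> Y" "U \<in> Ult"
    unfolding dia_def by blast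
  moreover from this have "Q_rel f V V U"
    using ABT2_Q_rel_shift[OF f \<open>ABT2 UNIV inf f\<close>] \<open>X \<in> Pow Ult\<close> \<open>Z \<in> Pow Ult\<close>
    unfolding Ult_iff[symmetric] by blast
  ultimately show "U \<in> dia (Q_rel f) Ult (X \<inter> dia (Q_rel f) Ult X Y) Z"
    using \<open>X \<in> Pow Ult\<close> unfolding dia_def by blast
qed

lemma complex_ABT3:
  assumes g: "normal_additive (\<lambda>x y. - g x y)" and "ABT3 UNIV inf uminus f g"
  shows "ABT3 (Pow Ult) (\<inter>) (\<lambda>X. Ult - X) (dia (Q_rel f) Ult) (nec (S_rel g) Ult)"
  unfolding ABT3_def ba_le_iff_subset
proof (intro ballI subsetI)
  fix X Y U assume "X \<in> Pow Ult" "Y \<in> Pow Ult"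
    and "U \<in> dia (Q_rel f) Ult X (nec (S_rel g) Ult X (Ult - Y) \<inter> Y)"
  then obtain V W where "V \<in> X" "W \<in> nec (S_rel g) Ult X (Ult - Y)" "W \<in> Y"
    and "Q_rel f V U W" "U \<in> Ult"
    unfolding dia_def by blast
  moreover have "U \<notin> Y \<Longrightarrow> S_rel g V W U"
    using \<open>V \<in> X\<close> \<open>W \<in> nec (S_rel g) Ult X (Ult - Y)\<close> \<open>U \<in> Ult\<close> unfolding nec_def by blast
  ultimately show "U \<in> Y"
    using ABT3_Q_S_rel_eq[OF g \<open>ABT3 UNIV inf uminus f g\<close>] \<open>Y \<in> Pow Ult\<close>
    by (auto simp: Ult_def)
qed

lemma complex_wMIA:
  assumes "normal_additive f" "normal_additive (\<lambda>x y. - g x y)" "wMIA UNIV inf bot f g"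
  shows "wMIA (Pow Ult) (\<inter>) {} (dia (Q_rel f) Ult) (nec (S_rel g) Ult)"
  unfolding wMIA_def ba_le_iff_subset
proof (intro ballI impI subsetI)
  fix X Y U assume "X \<in> Pow Ult" "Y \<in> Pow Ult" "X \<noteq> {} \<and> Y \<noteq> {}"
    and U: "U \<in> nec (S_rel g) Ult X Y"
  then obtain V W where "V \<in> X" "W \<in> Y" "V \<in> Ult" "W \<in> Ult" by blast
  with U have "Q_rel f V U W"
    using wMIA_S_rel_imp_Q_rel[OF assms] unfolding nec_def Ult_iff by blast
  then show "U \<in> dia (Q_rel f) Ult X Y"
    using \<open>V \<in> X\<close> \<open>W \<in> Y\<close> U unfolding dia_def nec_def by blast
qed

lemma complex_ABTW:
  assumes "normal_additive (\<lambda>x y. - g x y)" "ABTW UNIV inf bot g"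
  shows "ABTW (Pow Ult) (\<inter>) {} (nec (S_rel g) Ult)"
  unfolding ABTW_def ba_le_iff_subset
proof (intro ballI impI subsetI)
  fix X U assume "X \<in> Pow Ult" "X \<noteq> {}" and U: "U \<in> nec (S_rel g) Ult X X"
  then obtain V where "V \<in> X" "V \<in> Ult" by blast
  with U have "U = V"
    using ABTW_S_rel_eq[OF assms] unfolding nec_def Ult_iff by blast
  then show "U \<in> X" using \<open>V \<in> X\<close> by simp
qed

lemma complex_ABT2s:
  assumes "ABT2s UNIV inf bot f"
  shows "ABT2s (Pow Ult) (\<inter>) {} (dia (Q_rel f) Ult)"
  unfolding ABT2s_def ba_le_iff_subset
proof (intro ballI impI subsetI)
  fix X Y :: "'a set set" and U assume "X \<in> Pow Ult" "Y \<in> Pow Ult" "Y \<noteq> {}" and "U \<in> X"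
  then obtain W where "W \<in> Y" "U \<in> Ult" "W \<in> Ult" by blast
  then have "Q_rel f U U W" using ABT2s_Q_rel[OF assms] unfolding Ult_iff by blast
  then show "U \<in> dia (Q_rel f) Ult X Y"
    using \<open>U \<in> X\<close> \<open>W \<in> Y\<close> \<open>U \<in> Ult\<close> unfolding dia_def by blast
qed

lemma complex_betw_alg:
  assumes "betw_alg UNIV sup inf uminus bot top f g"
  shows "betw_alg (Pow Ult) (\<union>) (\<inter>) (\<lambda>X. Ult - X) {} Ult (dia (Q_rel f) Ult) (nec (S_rel g) Ult)"
proof -
  have ps: "ps_alg UNIV sup inf uminus bot top f g"
    using assms unfolding betw_alg_def by blast
  note f = ps_alg_normal_additive(1)[OF ps] and g = ps_alg_normal_additive(2)[OF ps]
  show ?thesis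
    using assms complex_ps_alg[OF ps] complex_ABT0[OF f] complex_ABT1_dia complex_ABT1_nec
      complex_ABT2[OF f] complex_ABT3[OF g] complex_wMIA[OF f g]
    unfolding betw_alg_def by blast
qed

lemma complex_weak_betw_alg:
  assumes "weak_betw_alg UNIV sup inf uminus bot top f g"
  shows "weak_betw_alg (Pow Ult) (\<union>) (\<inter>) (\<lambda>X. Ult - X) {} Ult (dia (Q_rel f) Ult) (nec (S_rel g) Ult)"
proof -
  have ps: "ps_alg UNIV sup inf uminus bot top f g"
    using assms unfolding weak_betw_alg_def by blast
  note f = ps_alg_normal_additive(1)[OF ps] and g = ps_alg_normal_additive(2)[OF ps]
  show ?thesis
    using assms complex_ps_alg[OF ps] complex_ABT0[OF f] complex_ABT1_dia complex_ABT1_nec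
      complex_ABT2[OF f] complex_ABTW[OF g]
    unfolding weak_betw_alg_def by blast
qed

lemma complex_strong_betw_alg:
  assumes "strong_betw_alg UNIV sup inf uminus bot top f g"
  shows "strong_betw_alg (Pow Ult) (\<union>) (\<inter>) (\<lambda>X. Ult - X) {} Ult (dia (Q_rel f) Ult) (nec (S_rel g) Ult)"
proof -
  have ps: "ps_alg UNIV sup inf uminus bot top f g"
    using assms unfolding strong_betw_alg_def by blast
  note f = ps_alg_normal_additive(1)[OF ps] and g = ps_alg_normal_additive(2)[OF ps]
  show ?thesis
    using assms complex_ps_alg[OF ps] complex_ABT1_dia complex_ABT1_nec complex_ABT3[OF g]
      complex_wMIA[OF f g] complex_ABT2s
    unfolding strong_betw_alg_def by blast
qed

theorem theorem42:
  fixes f g :: "'a::boolean_algebra \<Rightarrow> 'a \<Rightarrow> 'a"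
  shows
  "(betw_alg UNIV sup inf uminus bot top f g \<longrightarrow>
      ps_embedding UNIV sup inf uminus bot top f g
        (Pow Ult) (\<union>) (\<inter>) (\<lambda>X. Ult - X) {} Ult (dia (Q_rel f) Ult) (nec (S_rel g) Ult) stone \<and>
      betw_alg (Pow Ult) (\<union>) (\<inter>) (\<lambda>X. Ult - X) {} Ult (dia (Q_rel f) Ult) (nec (S_rel g) Ult)) \<and>
   (weak_betw_alg UNIV sup inf uminus bot top f g \<longrightarrow>
      ps_embedding UNIV sup inf uminus bot top f g
        (Pow Ult) (\<union>) (\<inter>) (\<lambda>X. Ult - X) {} Ult (dia (Q_rel f) Ult) (nec (S_rel g) Ult) stone \<and>
      weak_betw_alg (Pow Ult) (\<union>) (\<inter>) (\<lambda>X. Ult - X) {} Ult (dia (Q_rel f) Ult) (nec (S_rel g) Ult)) \<and>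
   (strong_betw_alg UNIV sup inf uminus bot top f g \<longrightarrow>
      ps_embedding UNIV sup inf uminus bot top f g
        (Pow Ult) (\<union>) (\<inter>) (\<lambda>X. Ult - X) {} Ult (dia (Q_rel f) Ult) (nec (S_rel g) Ult) stone \<and>
      strong_betw_alg (Pow Ult) (\<union>) (\<inter>) (\<lambda>X. Ult - X) {} Ult (dia (Q_rel f) Ult) (nec (S_rel g) Ult))"
proof -
  have "betw_alg UNIV sup inf uminus bot top f g \<or> weak_betw_alg UNIV sup inf uminus bot top f g \<or>
      strong_betw_alg UNIV sup inf uminus bot top f g \<Longrightarrow> ps_alg UNIV sup inf uminus bot top f g"
    unfolding betw_alg_def weak_betw_alg_def strong_betw_alg_def by blast
  then show ?thesis
    using stone_ps_embedding complex_betw_alg complex_weak_betw_alg complex_strong_betw_alg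
    by blast
qed

end
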